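(* Let $G=(m,n,\boldsymbol{c},\boldsymbol{d},r_{\max},r_{\min})$ be an interbank lending game, let $\alpha\in(0,1]$, and let $\boldsymbol{s}^1\in\boldsymbol{S}$ be any initial strategy profile. Then the eager $\alpha$-uniform best-response dynamics $(\boldsymbol{s}^t)_{t\in\mathbb{N}}$ started at $\boldsymbol{s}^1$ converges to the unique pure Nash equilibrium $\boldsymbol{s}^*$ of $G$.
   Context: An interbank lending game $G=(m,n,\boldsymbol{c},\boldsymbol{d},r_{\max},r_{\min})$ consists of positive integers $m,n$, budgets $\boldsymbol{c}\in\mathbb{R}_{>0}^m$, demands $\boldsymbol{d}\in\mathbb{R}_{>0}^n$ and reals $0<r_{\min}<r_{\max}$. The players are the lenders $L=\{1,\dots,m\}$; $B=\{1,\dots,n\}$ is the set of borrowers. Lender $i$'s strategy set is $S_i=\{s_i\in\mathbb{R}_{\ge0}^n:\sum_{j\in B}s_{ij}\le c_i\}$, the strategy space is $\boldsymbol{S}=\prod_{i\in L}S_i$ with elements $\boldsymbol{s}=(s_{ij})$. The interest rate of borrower $j$ is $r_j(\boldsymbol{s})=(r_{\min}-r_{\max})\frac{\sum_{i\in L}s_{ij}}{d_j}+r_{\max}$ and lender $i$'s utility is $u_i(\boldsymbol{s})=\sum_{j\in B}(r_j(\boldsymbol{s})-r_{\min})s_{ij}$. A pure Nash equilibrium is $\boldsymbol{s}^*\in\boldsymbol{S}$ with $u_i(\boldsymbol{s}^* )\ge u_i(s_i,\boldsymbol{s}^*_{-i})$ for all $i\in L$, $s_i\in S_i$; $G$ has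 exactly one. For $\boldsymbol{s}\in\boldsymbol{S}$, lender $i$'s best-response set is $\mathrm{BR}_i(\boldsymbol{s})=\arg\max\{u_i(z_i,\boldsymbol{s}_{-i}):z_i\in S_i\}$. The eager $\alpha$-uniform best-response dynamics is a sequence $(\boldsymbol{s}^t)_{t\in\mathbb{N}}$ in $\boldsymbol{S}$ such that for every $t$ there is an updating lender $i^t\in L$ chosen (with ties broken in an arbitrary deterministic way) as one whose best response yields the highest utility increase among all lenders, i.e. $i^t\in\arg\max_{i\in L}\max_{\hat s_i\in\mathrm{BR}_i(\boldsymbol{s}^t)}\bigl(u_i(\hat s_i,\boldsymbol{s}^t_{-i})-u_i(\boldsymbol{s}^t)\bigr)$, and $\boldsymbol{s}^{t+1}=(s^{t+1}_{i^t},\boldsymbol{s}^t_{-i^t})$ with $s^{t+1}_{i^t}=s^t_{i^t}+\alpha(\hat s^t_{i^t}-s^t_{i^t})$ for some $\hat s^t_{i^t}\in\mathrm{BR}_{i^t}(\boldsymbol{s}^t)$. Convergence means $\boldsymbol{s}^t\to\boldsymbol{s}^*$ as $t\to\infty$. *)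

theory Defs
  imports "HOL-Analysis.Analysis"
begin

text \<open>Lenders are indexed by 0..<m, borrowers by 0..<n. A strategy profile is a
function s :: nat => nat => real, s i j = amount lender i lends to borrower j;
entries outside the index ranges are required to be 0 (canonical representation).\<close>

type_synonym profile = "nat \<Rightarrow> nat \<Rightarrow> real"
type_synonym strategy = "nat \<Rightarrow> real"

definition valid_game :: "nat \<Rightarrow> nat \<Rightarrow> (nat \<Rightarrow> real) \<Rightarrow> (nat \<Rightarrow> real) \<Rightarrow> real \<Rightarrow> real \<Rightarrow> bool" where
  "valid_game m n c d rmax rmin \<longleftrightarrow>
     m > 0 \<and> n > 0 \<and> (\<forall>i<m. c i > 0) \<and> (\<forall>j<n. d j > 0) \<and> 0 < rmin \<and> rmin < rmax"

definition strat_set :: "nat \<Rightarrow> (nat \<Rightarrow> real) \<Rightarrow> nat \<Rightarrow> strategy set" where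
  "strat_set n c i = {x. (\<forall>j<n. x j \<ge> 0) \<and> (\<forall>j\<ge>n. x j = 0) \<and> (\<Sum>j<n. x j) \<le> c i}"

definition profiles :: "nat \<Rightarrow> nat \<Rightarrow> (nat \<Rightarrow> real) \<Rightarrow> profile set" where
  "profiles m n c = {s. (\<forall>i<m. s i \<in> strat_set n c i) \<and> (\<forall>i\<ge>m. s i = (\<lambda>_. 0))}"

definition rate :: "nat \<Rightarrow> (nat \<Rightarrow> real) \<Rightarrow> real \<Rightarrow> real \<Rightarrow> profile \<Rightarrow> nat \<Rightarrow> real" where
  "rate m d rmax rmin s j = (rmin - rmax) * (\<Sum>i<m. s i j) / d j + rmax"

definition utility :: "nat \<Rightarrow> nat \<Rightarrow> (nat \<Rightarrow> real) \<Rightarrow> real \<Rightarrow> real \<Rightarrow> profile \<Rightarrow> nat \<Rightarrow> real" where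
  "utility m n d rmax rmin s i = (\<Sum>j<n. (rate m d rmax rmin s j - rmin) * s i j)"

definition is_pure_NE :: "nat \<Rightarrow> nat \<Rightarrow> (nat \<Rightarrow> real) \<Rightarrow> (nat \<Rightarrow> real) \<Rightarrow> real \<Rightarrow> real \<Rightarrow> profile \<Rightarrow> bool" where
  "is_pure_NE m n c d rmax rmin s \<longleftrightarrow> s \<in> profiles m n c \<and>
     (\<forall>i<m. \<forall>x\<in>strat_set n c i. utility m n d rmax rmin s i \<ge> utility m n d rmax rmin (s(i := x)) i)"

definition best_responses :: "nat \<Rightarrow> nat \<Rightarrow> (nat \<Rightarrow> real) \<Rightarrow> (nat \<Rightarrow> real) \<Rightarrow> real \<Rightarrow> real \<Rightarrow> profile \<Rightarrow> nat \<Rightarrow> strategy set" where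
  "best_responses m n c d rmax rmin s i =
     {z \<in> strat_set n c i. \<forall>x\<in>strat_set n c i.
        utility m n d rmax rmin (s(i := x)) i \<le> utility m n d rmax rmin (s(i := z)) i}"

definition eager_rule :: "nat \<Rightarrow> nat \<Rightarrow> (nat \<Rightarrow> real) \<Rightarrow> (nat \<Rightarrow> real) \<Rightarrow> real \<Rightarrow> real
     \<Rightarrow> (profile \<Rightarrow> nat \<times> strategy) \<Rightarrow> bool" where
  "eager_rule m n c d rmax rmin sel \<longleftrightarrow>
     (\<forall>s\<in>profiles m n c.
        fst (sel s) < m \<and>
        snd (sel s) \<in> best_responses m n c d rmax rmin s (fst (sel s)) \<and>
        (\<forall>k<m. \<forall>z\<in>best_responses m n c d rmax rmin s k.
           utility m n d rmax rmin (s(k := z)) k - utility m n d rmax rmin s k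
           \<le> utility m n d rmax rmin (s(fst (sel s) := snd (sel s))) (fst (sel s))
              - utility m n d rmax rmin s (fst (sel s))))"

definition eager_uniform_BR_dynamics :: "nat \<Rightarrow> nat \<Rightarrow> (nat \<Rightarrow> real) \<Rightarrow> (nat \<Rightarrow> real) \<Rightarrow> real \<Rightarrow> real
     \<Rightarrow> real \<Rightarrow> (profile \<Rightarrow> nat \<times> strategy) \<Rightarrow> (nat \<Rightarrow> profile) \<Rightarrow> bool" where
  "eager_uniform_BR_dynamics m n c d rmax rmin \<alpha> sel seq \<longleftrightarrow>
     eager_rule m n c d rmax rmin sel \<and>
     (\<forall>t. seq (Suc t) = (let (i, z) = sel (seq t)
                          in (seq t)(i := (\<lambda>j. seq t i j + \<alpha> * (z j - seq t i j)))))"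

end

theory Submission
  imports Defs "HOL-Library.Function_Algebras"
begin

text \<open>With \<open>a = rmax - rmin\<close> and \<open>S\<^sub>j = \<Sum>\<^sub>i s\<^sub>i\<^sub>j\<close>, the function
  \<open>P(s) = \<Sum>\<^sub>j a (S\<^sub>j - (S\<^sub>j\<^sup>2 + \<Sum>\<^sub>i s\<^sub>i\<^sub>j\<^sup>2) / (2 d\<^sub>j))\<close>
  is an exact potential: a unilateral deviation changes the deviator's utility exactly as it
  changes \<open>P\<close>. \<open>P\<close> is a concave quadratic, \<open>P(s + v) = P(s) + DP\<^sub>s(v) - Q(v)\<close> with \<open>Q\<close>
  positive definite, so its maximiser \<open>s\<^sup>*\<close> over the compact set of profiles is the only
  profile at which no lender can raise \<open>P\<close>, i.e. the unique equilibrium, and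
  \<open>P(s\<^sup>*) - P(s) \<ge> Q(s - s\<^sup>*)\<close>.
  Each step of the dynamics raises \<open>P\<close> by at least \<open>\<alpha>\<close> times the largest unilateral gain
  \<open>G\<^sub>t\<close>; as \<open>P\<close> is bounded, \<open>G\<^sub>t \<rightarrow> 0\<close>. Conversely, splitting \<open>DP\<^sub>s(s\<^sup>* - s)\<close> lender
  by lender and comparing with steps of length \<open>\<tau>\<close> towards \<open>s\<^sup>*\<close> gives
  \<open>P(s\<^sup>*) - P(s) \<le> m G / \<tau> + \<tau> B\<close> for all \<open>\<tau> \<in> (0, 1]\<close> and a constant \<open>B\<close>.
  Hence \<open>P(s\<^sup>t) \<rightarrow> P(s\<^sup>*)\<close>, and quadratic growth turns this into \<open>s\<^sup>t \<rightarrow> s\<^sup>*\<close>.\<close>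

lemma compact_PiE_UNIV:
  fixes K :: "'a \<Rightarrow> 'b::topological_space set"
  assumes "\<And>i. compact (K i)"
  shows "compact (PiE UNIV K)"
proof -
  have "compactin (product_topology (\<lambda>_. euclidean) UNIV) (PiE UNIV K)"
    using assms by (simp add: compactin_PiE)
  then show ?thesis by (simp add: euclidean_product_topology)
qed

lemma continuous_on_apply [continuous_intros]:
  "continuous_on S (\<lambda>x::'a \<Rightarrow> 'b::topological_space. x i)"
  by (rule continuous_on_product_then_coordinatewise[OF continuous_on_id])

lemma continuous_on_apply2 [continuous_intros]:
  "continuous_on S (\<lambda>x::'a \<Rightarrow> 'b \<Rightarrow> 'c::topological_space. x i j)"
  by (rule continuous_on_product_then_coordinatewise[OF continuous_on_apply])

lemma continuous_on_fun_upd [continuous_intros]: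
  fixes g :: "'a \<Rightarrow> 'b::topological_space"
  assumes "continuous_on A f"
  shows "continuous_on A (\<lambda>x. g(i := f x))"
proof (rule continuous_on_coordinatewise_then_product)
  fix k
  show "continuous_on A (\<lambda>x. (g(i := f x)) k)"
    by (cases "k = i") (simp_all add: assms)
qed

lemma increments_tendsto_zero:
  fixes f g :: "nat \<Rightarrow> real"
  assumes "\<And>t. 0 \<le> g t" and "\<And>t. g t \<le> f (Suc t) - f t" and "\<And>t. f t \<le> M"
  shows "g \<longlonglongrightarrow> 0"
proof -
  have "(\<Sum>t<T. g t) \<le> M - f 0" for T
  proof -
    have "(\<Sum>t<T. g t) \<le> (\<Sum>t<T. f (Suc t) - f t)"
      using assms(2) by (intro sum_mono)
    also have "\<dots> = f T - f 0"
      by (rule sum_lessThan_telescope)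
    finally show ?thesis
      using assms(3)[of T] by linarith
  qed
  then have "summable g"
    using assms(1) by (intro summableI_nonneg_bounded)
  then show ?thesis
    by (rule summable_LIMSEQ_zero)
qed

lemma le_zero_if_le_small_multiples:
  fixes L B :: real
  assumes "\<And>\<tau>. 0 < \<tau> \<Longrightarrow> \<tau> \<le> 1 \<Longrightarrow> L \<le> \<tau> * B"
  shows "L \<le> 0"
proof (rule tendsto_lowerbound)
  show "((\<lambda>\<tau>. \<tau> * B) \<longlongrightarrow> 0) (at_right 0)"
    by (auto intro!: tendsto_eq_intros)
  have "\<forall>\<^sub>F \<tau> in at_right 0. \<tau> \<in> {0<..<(1::real)}"
    by (rule eventually_at_right_real) simp
  then show "\<forall>\<^sub>F \<tau> in at_right 0. L \<le> \<tau> * B"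
    by eventually_elim (use assms in auto)
qed simp

lemma tendsto_zero_if_tradeoff_bound:
  fixes e G :: "nat \<Rightarrow> real"
  assumes e_nonneg: "\<And>t. 0 \<le> e t" and G: "G \<longlonglongrightarrow> 0"
    and tradeoff: "\<And>t \<tau>. 0 < \<tau> \<Longrightarrow> \<tau> \<le> 1 \<Longrightarrow> e t \<le> G t / \<tau> + \<tau> * B"
  shows "e \<longlonglongrightarrow> 0"
proof (rule LIMSEQ_I)
  fix r :: real
  assume r: "0 < r"
  define \<tau> where "\<tau> = min 1 (r / (2 * (\<bar>B\<bar> + 1)))"
  have \<tau>: "0 < \<tau>" "\<tau> \<le> 1"
    using r by (auto simp: \<tau>_def)
  have "\<tau> \<le> r / (2 * (\<bar>B\<bar> + 1))"
    by (simp add: \<tau>_def)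
  then have "\<tau> * (1 + \<bar>B\<bar>) \<le> r / 2"
    by (simp add: pos_le_divide_eq field_simps)
  obtain N where N: "\<forall>t\<ge>N. norm (G t - 0) < \<tau> * \<tau>"
    using LIMSEQ_D[OF G] \<tau> by (meson mult_pos_pos)
  have "norm (e t - 0) < r" if "t \<ge> N" for t
  proof -
    have "G t / \<tau> < \<tau>"
      using N that \<tau> by (auto simp: pos_divide_less_eq)
    moreover have "\<tau> * B \<le> \<tau> * \<bar>B\<bar>"
      using \<tau> by (intro mult_left_mono) auto
    ultimately have "e t < \<tau> * (1 + \<bar>B\<bar>)"
      using tradeoff[OF \<tau>, of t] by (simp add: algebra_simps)
    then show ?thesis
      using e_nonneg[of t] \<open>\<tau> * (1 + \<bar>B\<bar>) \<le> r / 2\<close> r by simp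
  qed
  then show "\<exists>N. \<forall>t\<ge>N. norm (e t - 0) < r"
    by blast
qed

lemma tendsto_if_sq_dist_le:
  fixes f e :: "nat \<Rightarrow> real"
  assumes sq: "\<And>t. (f t - l)\<^sup>2 \<le> C * e t" and e: "e \<longlonglongrightarrow> 0"
  shows "f \<longlonglongrightarrow> l"
proof -
  have "(\<lambda>t. f t - l) \<longlonglongrightarrow> 0"
  proof (rule Lim_null_comparison)
    show "\<forall>\<^sub>F t in sequentially. norm (f t - l) \<le> sqrt (C * e t)"
      using real_sqrt_le_mono[OF sq] by (intro always_eventually allI) simp
    show "(\<lambda>t. sqrt (C * e t)) \<longlonglongrightarrow> 0"
      using tendsto_real_sqrt[OF tendsto_mult_right_zero[OF e, of C]] by simp
  qed
  then show ?thesis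
    by (rule LIM_zero_cancel)
qed

lemma strat_set_entry_bounds:
  assumes "x \<in> strat_set n c i" and "j < n"
  shows "0 \<le> x j" and "x j \<le> c i"
proof -
  show "0 \<le> x j"
    using assms by (auto simp: strat_set_def)
  have "x j \<le> (\<Sum>j<n. x j)"
    using assms by (intro member_le_sum) (auto simp: strat_set_def)
  then show "x j \<le> c i"
    using assms by (auto simp: strat_set_def)
qed

lemma strat_set_eq_PiE_Int:
  "strat_set n c i =
     PiE UNIV (\<lambda>j. if j < n then {0..c i} else {0}) \<inter> {x. (\<Sum>j<n. x j) \<le> c i}"
proof (intro equalityI subsetI)
  fix x
  assume "x \<in> strat_set n c i"
  then show "x \<in> PiE UNIV (\<lambda>j. if j < n then {0..c i} else {0}) \<inter> {x. (\<Sum>j<n. x j) \<le> c i}"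
    using strat_set_entry_bounds[of x n c i] by (auto simp: strat_set_def PiE_iff)
next
  fix x
  assume "x \<in> PiE UNIV (\<lambda>j. if j < n then {0..c i} else {0}) \<inter> {x. (\<Sum>j<n. x j) \<le> c i}"
  then show "x \<in> strat_set n c i"
    by (auto simp: strat_set_def PiE_iff) (metis atLeastAtMost_iff not_le singletonD)+
qed

lemma compact_strat_set: "compact (strat_set n c i)"
proof -
  have "compact (PiE UNIV (\<lambda>j. if j < n then {0..c i} else {0::real}))"
    by (rule compact_PiE_UNIV) auto
  moreover have "closed {x::nat \<Rightarrow> real. (\<Sum>j<n. x j) \<le> c i}"
    by (intro closed_Collect_le continuous_intros)
  ultimately show ?thesis
    unfolding strat_set_eq_PiE_Int by (rule compact_Int_closed)
qed

lemma zero_in_strat_set: "0 \<le> c i \<Longrightarrow> 0 \<in> strat_set n c i"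
  by (simp add: strat_set_def)

lemma strat_set_segment:
  assumes "x \<in> strat_set n c i" and "y \<in> strat_set n c i" and "0 \<le> t" and "t \<le> 1"
  shows "(\<lambda>j. y j + t * (x j - y j)) \<in> strat_set n c i"
proof -
  have "(\<Sum>j<n. y j + t * (x j - y j)) = (1 - t) * (\<Sum>j<n. y j) + t * (\<Sum>j<n. x j)"
    by (simp add: sum.distrib sum_distrib_left sum_subtractf algebra_simps)
  also have "\<dots> \<le> (1 - t) * c i + t * c i"
    using assms by (intro add_mono mult_left_mono) (auto simp: strat_set_def)
  finally have "(\<Sum>j<n. y j + t * (x j - y j)) \<le> c i"
    by (simp add: algebra_simps)
  moreover have "0 \<le> y j + t * (x j - y j)" if "j < n" for j
  proof -
    have "0 \<le> (1 - t) * y j + t * x j"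
      using assms that by (intro add_nonneg_nonneg mult_nonneg_nonneg) (auto simp: strat_set_def)
    then show ?thesis
      by (simp add: algebra_simps)
  qed
  ultimately show ?thesis
    using assms by (auto simp: strat_set_def)
qed

lemma profiles_eq_PiE:
  "profiles m n c = PiE UNIV (\<lambda>i. if i < m then strat_set n c i else {\<lambda>_. 0})"
  by (auto simp: profiles_def PiE_iff) (metis not_le singletonD)+

lemma compact_profiles: "compact (profiles m n c)"
  unfolding profiles_eq_PiE by (rule compact_PiE_UNIV) (auto intro: compact_strat_set)

lemma zero_in_profiles: "(\<And>i. i < m \<Longrightarrow> 0 \<le> c i) \<Longrightarrow> 0 \<in> profiles m n c"
  using zero_in_strat_set[of c _ n] by (auto simp: profiles_def zero_fun_def)

lemma profiles_row: "s \<in> profiles m n c \<Longrightarrow> i < m \<Longrightarrow> s i \<in> strat_set n c i"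
  by (simp add: profiles_def)

lemma profiles_update:
  "s \<in> profiles m n c \<Longrightarrow> i < m \<Longrightarrow> x \<in> strat_set n c i \<Longrightarrow> s(i := x) \<in> profiles m n c"
  by (simp add: profiles_def)

lemma profiles_entry_eq_0:
  "s \<in> profiles m n c \<Longrightarrow> \<not> (i < m \<and> j < n) \<Longrightarrow> s i j = 0"
  by (cases "i < m") (auto simp: profiles_def strat_set_def)

definition uniform_BR_step :: "real \<Rightarrow> (profile \<Rightarrow> nat \<times> strategy) \<Rightarrow> profile \<Rightarrow> profile" where
  "uniform_BR_step \<alpha> sel s = (case sel s of (i, z) \<Rightarrow> s(i := (\<lambda>j. s i j + \<alpha> * (z j - s i j))))"

lemma eager_uniform_BR_dynamics_Suc:
  "eager_uniform_BR_dynamics m n c d rmax rmin \<alpha> sel seq \<Longrightarrow>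
    seq (Suc t) = uniform_BR_step \<alpha> sel (seq t)"
  by (simp add: eager_uniform_BR_dynamics_def uniform_BR_step_def)

locale lending_game =
  fixes m n :: nat and c d :: "nat \<Rightarrow> real" and rmax rmin :: real
  assumes valid: "valid_game m n c d rmax rmin"
begin

abbreviation "Prof \<equiv> profiles m n c"
abbreviation "Strat \<equiv> strat_set n c"
abbreviation "util \<equiv> utility m n d rmax rmin"

lemma
  shows lenders_pos: "0 < m"
    and budget_pos: "i < m \<Longrightarrow> 0 < c i"
    and demand_pos: "j < n \<Longrightarrow> 0 < d j"
    and spread_pos: "0 < rmax - rmin"
  using valid by (auto simp: valid_game_def)

definition load :: "profile \<Rightarrow> nat \<Rightarrow> real" where
  "load s j = (\<Sum>k<m. s k j)"

definition potential :: "profile \<Rightarrow> real" where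
  "potential s =
     (\<Sum>j<n. (rmax - rmin) * (load s j - ((load s j)\<^sup>2 + (\<Sum>k<m. (s k j)\<^sup>2)) / (2 * d j)))"

definition potential_deriv :: "profile \<Rightarrow> profile \<Rightarrow> real" where
  "potential_deriv s v = (\<Sum>j<n. \<Sum>k<m. (rmax - rmin) * (1 - (load s j + s k j) / d j) * v k j)"

definition potential_curv :: "profile \<Rightarrow> real" where
  "potential_curv v = (\<Sum>j<n. (rmax - rmin) * ((load v j)\<^sup>2 + (\<Sum>k<m. (v k j)\<^sup>2)) / (2 * d j))"

lemma load_add: "load (s + v) j = load s j + load v j"
  by (simp add: load_def sum.distrib)

lemma potential_add:
  "potential (s + v) = potential s + potential_deriv s v - potential_curv v"
proof -
  have "(rmax - rmin) * (load (s + v) j - ((load (s + v) j)\<^sup>2 + (\<Sum>k<m. ((s + v) k j)\<^sup>2)) / (2 * d j))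
      = (rmax - rmin) * (load s j - ((load s j)\<^sup>2 + (\<Sum>k<m. (s k j)\<^sup>2)) / (2 * d j))
        + (\<Sum>k<m. (rmax - rmin) * (1 - (load s j + s k j) / d j) * v k j)
        - (rmax - rmin) * ((load v j)\<^sup>2 + (\<Sum>k<m. (v k j)\<^sup>2)) / (2 * d j)"
    if "j < n" for j
  proof -
    have "d j > 0"
      using demand_pos that .
    have squares: "(\<Sum>k<m. ((s + v) k j)\<^sup>2)
        = (\<Sum>k<m. (s k j)\<^sup>2) + 2 * (\<Sum>k<m. s k j * v k j) + (\<Sum>k<m. (v k j)\<^sup>2)"
      by (simp add: power2_sum sum.distrib sum_distrib_left mult.assoc)
    have linear: "(\<Sum>k<m. (rmax - rmin) * (1 - (load s j + s k j) / d j) * v k j)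
        = (rmax - rmin) * (load v j - (load s j * load v j + (\<Sum>k<m. s k j * v k j)) / d j)"
    proof -
      have "(\<Sum>k<m. (rmax - rmin) * (1 - (load s j + s k j) / d j) * v k j)
          = (\<Sum>k<m. (rmax - rmin) * v k j - ((rmax - rmin) * load s j / d j) * v k j
                     - ((rmax - rmin) / d j) * (s k j * v k j))"
        by (intro sum.cong) (auto simp: algebra_simps add_divide_distrib)
      also have "\<dots> = (rmax - rmin) * load v j - ((rmax - rmin) * load s j / d j) * load v j
                       - ((rmax - rmin) / d j) * (\<Sum>k<m. s k j * v k j)"
        by (simp add: sum_subtractf sum_distrib_left load_def)
      finally show ?thesis
        by (simp add: algebra_simps add_divide_distrib diff_divide_distrib)
    qed
    show ?thesis
      unfolding load_add squares linear using \<open>d j > 0\<close>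
      by (simp add: field_simps power2_eq_square)
  qed
  then show ?thesis
    unfolding potential_def potential_deriv_def potential_curv_def
    by (simp add: sum.distrib sum_subtractf)
qed

lemma update_diff_apply: "((s :: profile)(i := x) - s) k j = (if k = i then x j - s i j else 0)"
  by auto

lemma load_update_diff: "i < m \<Longrightarrow> load (s(i := x) - s) j = x j - s i j"
  by (simp only: load_def update_diff_apply) simp

lemma potential_deriv_update_diff:
  "i < m \<Longrightarrow> potential_deriv s (s(i := x) - s)
     = (\<Sum>j<n. (rmax - rmin) * (1 - (load s j + s i j) / d j) * (x j - s i j))"
  by (simp only: potential_deriv_def update_diff_apply) (simp add: if_distrib cong: if_cong)

lemma potential_curv_update_diff:
  "i < m \<Longrightarrow> potential_curv (s(i := x) - s) = (\<Sum>j<n. (rmax - rmin) * (x j - s i j)\<^sup>2 / d j)"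
  unfolding potential_curv_def load_update_diff
  by (simp only: update_diff_apply) (simp add: if_distrib[where f = "\<lambda>y. y\<^sup>2"] cong: if_cong)

lemma potential_curv_nonneg: "0 \<le> potential_curv v"
  unfolding potential_curv_def using spread_pos demand_pos
  by (intro sum_nonneg) (auto intro!: divide_nonneg_pos mult_nonneg_nonneg add_nonneg_nonneg sum_nonneg)

lemma potential_curv_ge_entry:
  assumes "i < m" and "j < n"
  shows "(rmax - rmin) * (v i j)\<^sup>2 / (2 * d j) \<le> potential_curv v"
proof -
  have "(v i j)\<^sup>2 \<le> (load v j)\<^sup>2 + (\<Sum>k<m. (v k j)\<^sup>2)"
    using member_le_sum[of i "{..<m}" "\<lambda>k. (v k j)\<^sup>2"] assms by (simp add: add_increasing)
  then have "(rmax - rmin) * (v i j)\<^sup>2 / (2 * d j)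
      \<le> (rmax - rmin) * ((load v j)\<^sup>2 + (\<Sum>k<m. (v k j)\<^sup>2)) / (2 * d j)"
    using spread_pos demand_pos[OF assms(2)] by (intro divide_right_mono mult_left_mono) auto
  also have "\<dots> \<le> potential_curv v"
    unfolding potential_curv_def using assms spread_pos demand_pos
    by (intro member_le_sum[where
          f = "\<lambda>j. (rmax - rmin) * ((load v j)\<^sup>2 + (\<Sum>k<m. (v k j)\<^sup>2)) / (2 * d j)"])
      (auto intro!: divide_nonneg_pos mult_nonneg_nonneg add_nonneg_nonneg sum_nonneg)
  finally show ?thesis .
qed

lemma load_update: "i < m \<Longrightarrow> load (s(i := x)) j = load s j + (x j - s i j)"
  using load_add[of s "s(i := x) - s" j] load_update_diff[of i s x j] by simp

lemma rate_minus_rmin: "rate m d rmax rmin s j - rmin = (rmax - rmin) * (1 - load s j / d j)"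
  by (cases "d j = 0") (simp_all add: rate_def load_def field_simps)

lemma potential_update:
  "potential (s(i := x))
     = potential s + potential_deriv s (s(i := x) - s) - potential_curv (s(i := x) - s)"
  using potential_add[of s "s(i := x) - s"] by simp

lemma utility_update_diff:
  assumes "i < m"
  shows "util (s(i := x)) i - util s i = potential (s(i := x)) - potential s"
proof -
  have "(rate m d rmax rmin (s(i := x)) j - rmin) * x j - (rate m d rmax rmin s j - rmin) * s i j
      = (rmax - rmin) * (1 - (load s j + s i j) / d j) * (x j - s i j)
        - (rmax - rmin) * (x j - s i j)\<^sup>2 / d j" if "j < n" for j
    using demand_pos[OF that]
    by (simp add: rate_minus_rmin load_update[OF assms] field_simps power2_eq_square)
  then show ?thesis
    unfolding potential_update potential_deriv_update_diff[OF assms] potential_curv_update_diff[OF assms]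
    by (simp add: utility_def sum_subtractf[symmetric])
qed

lemma potential_segment:
  assumes "i < m"
  shows "potential (s(i := (\<lambda>j. s i j + t * (x j - s i j)))) - potential s
     = t * potential_deriv s (s(i := x) - s) - t\<^sup>2 * potential_curv (s(i := x) - s)"
  unfolding potential_update[of s i] potential_deriv_update_diff[OF assms]
    potential_curv_update_diff[OF assms]
  by (simp add: sum_distrib_left power_mult_distrib mult_ac)

lemma potential_segment_ge:
  assumes "i < m" and "0 \<le> t" and "t \<le> 1"
  shows "t * (potential (s(i := x)) - potential s)
     \<le> potential (s(i := (\<lambda>j. s i j + t * (x j - s i j)))) - potential s"
proof -
  let ?Q = "potential_curv (s(i := x) - s)"
  have "t\<^sup>2 \<le> t"
    using assms by (simp add: power2_eq_square mult_left_le)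
  then have "t\<^sup>2 * ?Q \<le> t * ?Q"
    using potential_curv_nonneg by (rule mult_right_mono)
  then show ?thesis
    unfolding potential_segment[OF assms(1)] potential_update[of s i x] by (simp add: right_diff_distrib)
qed

lemma potential_curv_update_diff_le:
  assumes "s \<in> Prof" and "i < m" and "x \<in> Strat i"
  shows "potential_curv (s(i := x) - s) \<le> (\<Sum>j<n. (rmax - rmin) * (c i)\<^sup>2 / d j)"
  unfolding potential_curv_update_diff[OF assms(2)]
proof (rule sum_mono)
  fix j
  assume "j \<in> {..<n}"
  then have j: "j < n"
    by simp
  have "\<bar>x j - s i j\<bar> \<le> \<bar>c i\<bar>"
    using strat_set_entry_bounds[OF assms(3) j] strat_set_entry_bounds[OF profiles_row[OF assms(1,2)] j]
    by (auto simp: abs_le_iff)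
  then have "(x j - s i j)\<^sup>2 \<le> (c i)\<^sup>2"
    by (simp only: abs_le_square_iff)
  then show "(rmax - rmin) * (x j - s i j)\<^sup>2 / d j \<le> (rmax - rmin) * (c i)\<^sup>2 / d j"
    using spread_pos demand_pos[OF j] by (intro divide_right_mono mult_left_mono) auto
qed

definition curv_bound :: real where
  "curv_bound = (\<Sum>i<m. \<Sum>j<n. (rmax - rmin) * (c i)\<^sup>2 / d j)"

lemma potential_deriv_sum_rows:
  "potential_deriv s (s' - s) = (\<Sum>i<m. potential_deriv s (s(i := s' i) - s))"
proof -
  have "(\<Sum>i<m. potential_deriv s (s(i := s' i) - s))
      = (\<Sum>i<m. \<Sum>j<n. (rmax - rmin) * (1 - (load s j + s i j) / d j) * (s' i j - s i j))"
    by (intro sum.cong) (simp_all add: potential_deriv_update_diff)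
  then show ?thesis
    unfolding potential_deriv_def by (simp add: sum.swap[of _ "{..<n}"])
qed

text \<open>Testing the gain bound against the step of length \<open>\<tau>\<close> from \<open>s\<close> towards \<open>s'\<close>,
  one lender at a time, bounds the directional derivative of the potential.\<close>
lemma potential_deriv_le_gain_bound:
  fixes g \<tau> :: real
  assumes s: "s \<in> Prof" and s': "s' \<in> Prof"
    and gain: "\<And>k y. k < m \<Longrightarrow> y \<in> Strat k \<Longrightarrow> potential (s(k := y)) - potential s \<le> g"
    and \<tau>: "0 < \<tau>" "\<tau> \<le> 1"
  shows "potential_deriv s (s' - s) \<le> m * g / \<tau> + \<tau> * curv_bound"
proof -
  have row: "potential_deriv s (s(i := s' i) - s) \<le> g / \<tau> + \<tau> * (\<Sum>j<n. (rmax - rmin) * (c i)\<^sup>2 / d j)"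
    if i: "i < m" for i
  proof -
    let ?L = "potential_deriv s (s(i := s' i) - s)" and ?Q = "potential_curv (s(i := s' i) - s)"
    let ?B = "\<Sum>j<n. (rmax - rmin) * (c i)\<^sup>2 / d j"
    have "(\<lambda>j. s i j + \<tau> * (s' i j - s i j)) \<in> Strat i"
      using strat_set_segment[OF profiles_row[OF s' i] profiles_row[OF s i]] \<tau> by simp
    then have "potential (s(i := (\<lambda>j. s i j + \<tau> * (s' i j - s i j)))) - potential s \<le> g"
      by (rule gain[OF i])
    then have "\<tau> * ?L - \<tau>\<^sup>2 * ?Q \<le> g"
      unfolding potential_segment[OF i] .
    moreover have "\<tau>\<^sup>2 * ?Q \<le> \<tau>\<^sup>2 * ?B"
      by (rule mult_left_mono[OF potential_curv_update_diff_le[OF s i profiles_row[OF s' i]]]) simp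
    ultimately have "\<tau> * ?L \<le> g + \<tau>\<^sup>2 * ?B"
      by linarith
    then have "?L \<le> (g + \<tau>\<^sup>2 * ?B) / \<tau>"
      using \<tau> by (simp add: pos_le_divide_eq mult.commute)
    also have "\<dots> = g / \<tau> + \<tau> * ?B"
      using \<tau> by (simp add: add_divide_distrib power2_eq_square)
    finally show ?thesis .
  qed
  have "potential_deriv s (s' - s) = (\<Sum>i<m. potential_deriv s (s(i := s' i) - s))"
    by (rule potential_deriv_sum_rows)
  also have "\<dots> \<le> (\<Sum>i<m. g / \<tau> + \<tau> * (\<Sum>j<n. (rmax - rmin) * (c i)\<^sup>2 / d j))"
    using row by (intro sum_mono) simp
  also have "\<dots> = m * g / \<tau> + \<tau> * curv_bound"
    by (simp add: curv_bound_def sum.distrib sum_distrib_left)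
  finally show ?thesis .
qed

lemma potential_gap_le:
  fixes g \<tau> :: real
  assumes "s \<in> Prof" and "s' \<in> Prof"
    and "\<And>k y. k < m \<Longrightarrow> y \<in> Strat k \<Longrightarrow> potential (s(k := y)) - potential s \<le> g"
    and "0 < \<tau>" and "\<tau> \<le> 1"
  shows "potential s' - potential s \<le> m * g / \<tau> + \<tau> * curv_bound"
  using potential_add[of s "s' - s"] potential_deriv_le_gain_bound[OF assms]
    potential_curv_nonneg[of "s' - s"]
  by simp

definition potential_blockwise_max :: "profile \<Rightarrow> bool" where
  "potential_blockwise_max s \<longleftrightarrow> (\<forall>i<m. \<forall>y\<in>Strat i. potential (s(i := y)) \<le> potential s)"

lemma is_pure_NE_iff_blockwise_max:
  assumes "s \<in> Prof"
  shows "is_pure_NE m n c d rmax rmin s \<longleftrightarrow> potential_blockwise_max s"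
proof -
  have "util (s(i := x)) i \<le> util s i \<longleftrightarrow> potential (s(i := x)) \<le> potential s" if "i < m" for i x
    using utility_update_diff[OF that, of s x] by linarith
  then show ?thesis
    using assms by (auto simp: is_pure_NE_def potential_blockwise_max_def)
qed

lemma potential_deriv_nonpos_at_blockwise_max:
  assumes "s \<in> Prof" and "s' \<in> Prof" and "potential_blockwise_max s"
  shows "potential_deriv s (s' - s) \<le> 0"
proof (rule le_zero_if_le_small_multiples)
  have gain: "potential (s(k := y)) - potential s \<le> 0" if "k < m" "y \<in> Strat k" for k y
    using assms(3) that by (simp add: potential_blockwise_max_def)
  fix \<tau> :: real
  assume "0 < \<tau>" and "\<tau> \<le> 1"
  then show "potential_deriv s (s' - s) \<le> \<tau> * curv_bound"
    using potential_deriv_le_gain_bound[OF assms(1,2) gain] by simp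
qed

lemma potential_quadratic_growth:
  assumes "s \<in> Prof" and "s\<^sub>0 \<in> Prof" and "potential_blockwise_max s\<^sub>0"
  shows "potential_curv (s - s\<^sub>0) \<le> potential s\<^sub>0 - potential s"
  using potential_add[of s\<^sub>0 "s - s\<^sub>0"] potential_deriv_nonpos_at_blockwise_max[OF assms(2,1,3)]
  by simp

lemma blockwise_max_unique:
  assumes "s \<in> Prof" and "s' \<in> Prof"
    and "potential_blockwise_max s" and "potential_blockwise_max s'"
  shows "s = s'"
proof (intro ext)
  fix i j
  show "s i j = s' i j"
  proof (cases "i < m \<and> j < n")
    case True
    have "potential_curv (s - s') \<le> 0"
      using potential_quadratic_growth[OF assms(1,2,4)] potential_quadratic_growth[OF assms(2,1,3)]
        potential_curv_nonneg[of "s' - s"] by linarith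
    then have "(rmax - rmin) * (s i j - s' i j)\<^sup>2 / (2 * d j) \<le> 0"
      using potential_curv_ge_entry[of i j "s - s'"] True by simp
    then have "(rmax - rmin) * (s i j - s' i j)\<^sup>2 \<le> 0"
      using demand_pos[of j] True by (simp add: divide_le_0_iff)
    then have "(s i j - s' i j)\<^sup>2 \<le> 0"
      using spread_pos by (simp add: mult_le_0_iff)
    then show ?thesis
      by simp
  next
    case False
    then show ?thesis
      using profiles_entry_eq_0 assms(1,2) by metis
  qed
qed

lemma continuous_potential: "continuous_on A potential"
  unfolding potential_def load_def divide_inverse by (intro continuous_intros)

lemma potential_attains_max: "\<exists>s\<^sub>0\<in>Prof. \<forall>s\<in>Prof. potential s \<le> potential s\<^sub>0"
proof (rule continuous_attains_sup[OF compact_profiles _ continuous_potential])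
  show "Prof \<noteq> {}"
    using zero_in_profiles[of m c n] budget_pos by fastforce
qed

lemma blockwise_max_if_max:
  "s \<in> Prof \<Longrightarrow> \<forall>s'\<in>Prof. potential s' \<le> potential s \<Longrightarrow> potential_blockwise_max s"
  by (simp add: potential_blockwise_max_def profiles_update)

lemma tendsto_blockwise_max_if_potential_tendsto:
  assumes s\<^sub>0: "s\<^sub>0 \<in> Prof" "potential_blockwise_max s\<^sub>0" and seq: "\<And>t. seq t \<in> Prof"
    and lim: "(\<lambda>t. potential s\<^sub>0 - potential (seq t)) \<longlonglongrightarrow> 0"
  shows "(\<lambda>t. seq t i j) \<longlonglongrightarrow> s\<^sub>0 i j"
proof (cases "i < m \<and> j < n")
  case True
  have "(seq t i j - s\<^sub>0 i j)\<^sup>2 \<le> 2 * d j / (rmax - rmin) * (potential s\<^sub>0 - potential (seq t))" for t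
  proof -
    have "(rmax - rmin) * (seq t i j - s\<^sub>0 i j)\<^sup>2 / (2 * d j) \<le> potential s\<^sub>0 - potential (seq t)"
      using potential_curv_ge_entry[of i j "seq t - s\<^sub>0"] potential_quadratic_growth[OF seq[of t] s\<^sub>0] True
      by simp
    then show ?thesis
      using spread_pos demand_pos[of j] True by (simp add: field_simps)
  qed
  then show ?thesis
    using lim by (rule tendsto_if_sq_dist_le)
next
  case False
  then show ?thesis
    using profiles_entry_eq_0[OF seq] profiles_entry_eq_0[OF s\<^sub>0(1)] by simp
qed

lemma best_response_exists:
  assumes "i < m"
  shows "\<exists>z. z \<in> best_responses m n c d rmax rmin s i"
proof -
  have "continuous_on (Strat i) (\<lambda>x. potential (s(i := x)))"
    by (rule continuous_on_compose2[OF continuous_potential[of UNIV] continuous_on_fun_upd[OF continuous_on_id]])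
      simp
  moreover have "Strat i \<noteq> {}"
    using zero_in_strat_set[of c i n] budget_pos[OF assms] by auto
  ultimately obtain z where z: "z \<in> Strat i"
    and z_max: "\<And>y. y \<in> Strat i \<Longrightarrow> potential (s(i := y)) \<le> potential (s(i := z))"
    using continuous_attains_sup[OF compact_strat_set] by metis
  have "util (s(i := y)) i \<le> util (s(i := z)) i" if "y \<in> Strat i" for y
    using utility_update_diff[OF assms, of s y] utility_update_diff[OF assms, of s z] z_max[OF that]
    by linarith
  then show ?thesis
    using z unfolding best_responses_def by blast
qed

definition selected_gain :: "(profile \<Rightarrow> nat \<times> strategy) \<Rightarrow> profile \<Rightarrow> real" where
  "selected_gain sel s = potential (s(fst (sel s) := snd (sel s))) - potential s"

lemma eager_rule_gain_bound:
  assumes "eager_rule m n c d rmax rmin sel" and "s \<in> Prof" and "k < m" and "y \<in> Strat k"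
  shows "potential (s(k := y)) - potential s \<le> selected_gain sel s"
proof -
  obtain z where z: "z \<in> best_responses m n c d rmax rmin s k"
    using best_response_exists[OF assms(3)] by blast
  have "util (s(k := y)) k \<le> util (s(k := z)) k"
    using z assms(4) by (auto simp: best_responses_def)
  moreover have "fst (sel s) < m"
    and "util (s(k := z)) k - util s k
      \<le> util (s(fst (sel s) := snd (sel s))) (fst (sel s)) - util s (fst (sel s))"
    using assms(1-3) z by (auto simp: eager_rule_def)
  ultimately show ?thesis
    using utility_update_diff[OF assms(3), of s y] utility_update_diff[OF assms(3), of s z]
      utility_update_diff[of "fst (sel s)" s "snd (sel s)"]
    unfolding selected_gain_def by linarith
qed

lemma selected_gain_nonneg:
  assumes "eager_rule m n c d rmax rmin sel" and "s \<in> Prof"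
  shows "0 \<le> selected_gain sel s"
  using eager_rule_gain_bound[OF assms lenders_pos profiles_row[OF assms(2) lenders_pos]] by simp

lemma eager_step_in_profiles:
  assumes "eager_rule m n c d rmax rmin sel" and "s \<in> Prof" and "0 \<le> \<alpha>" and "\<alpha> \<le> 1"
  shows "uniform_BR_step \<alpha> sel s \<in> Prof"
proof -
  obtain i z where sel: "sel s = (i, z)"
    by fastforce
  then have i: "i < m" and z: "z \<in> Strat i"
    using assms(1,2) by (auto simp: eager_rule_def best_responses_def)
  then show ?thesis
    using profiles_update[OF assms(2) i strat_set_segment[OF z profiles_row[OF assms(2) i] assms(3,4)]]
    by (simp add: uniform_BR_step_def sel)
qed

lemma eager_step_potential_increase:
  assumes "eager_rule m n c d rmax rmin sel" and "s \<in> Prof" and "0 \<le> \<alpha>" and "\<alpha> \<le> 1"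
  shows "\<alpha> * selected_gain sel s \<le> potential (uniform_BR_step \<alpha> sel s) - potential s"
proof -
  obtain i z where sel: "sel s = (i, z)"
    by fastforce
  then have "i < m"
    using assms(1,2) by (auto simp: eager_rule_def)
  then show ?thesis
    using potential_segment_ge[OF _ assms(3,4), of i s z]
    by (simp add: uniform_BR_step_def selected_gain_def sel)
qed

lemma eager_dynamics_in_profiles:
  assumes "eager_uniform_BR_dynamics m n c d rmax rmin \<alpha> sel seq" and "seq 0 \<in> Prof"
    and "0 \<le> \<alpha>" and "\<alpha> \<le> 1"
  shows "seq t \<in> Prof"
proof (induction t)
  case 0
  show ?case
    by (fact assms(2))
next
  case (Suc t)
  have "eager_rule m n c d rmax rmin sel"
    using assms(1) by (simp add: eager_uniform_BR_dynamics_def)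
  then show ?case
    unfolding eager_uniform_BR_dynamics_Suc[OF assms(1)] using Suc assms(3,4) by (rule eager_step_in_profiles)
qed

lemma eager_dynamics_potential_tendsto_max:
  assumes dyn: "eager_uniform_BR_dynamics m n c d rmax rmin \<alpha> sel seq"
    and "seq 0 \<in> Prof" and \<alpha>: "0 < \<alpha>" "\<alpha> \<le> 1"
    and s\<^sub>0: "s\<^sub>0 \<in> Prof" "\<forall>s\<in>Prof. potential s \<le> potential s\<^sub>0"
  shows "(\<lambda>t. potential s\<^sub>0 - potential (seq t)) \<longlonglongrightarrow> 0"
proof -
  have rule: "eager_rule m n c d rmax rmin sel"
    using dyn by (simp add: eager_uniform_BR_dynamics_def)
  have seq: "seq t \<in> Prof" for t
    using eager_dynamics_in_profiles[OF dyn assms(2)] \<alpha> by simp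
  define G where "G t = selected_gain sel (seq t)" for t
  have "(\<lambda>t. \<alpha> * G t) \<longlonglongrightarrow> 0"
  proof (rule increments_tendsto_zero)
    show "0 \<le> \<alpha> * G t" for t
      using selected_gain_nonneg[OF rule seq] \<alpha> unfolding G_def by simp
    show "\<alpha> * G t \<le> potential (seq (Suc t)) - potential (seq t)" for t
      using eager_step_potential_increase[OF rule seq] \<alpha>
      unfolding G_def eager_uniform_BR_dynamics_Suc[OF dyn] by simp
    show "potential (seq t) \<le> potential s\<^sub>0" for t
      using s\<^sub>0 seq by blast
  qed
  then have "(\<lambda>t. m / \<alpha> * (\<alpha> * G t)) \<longlonglongrightarrow> 0"
    by (rule tendsto_mult_right_zero)
  then have "(\<lambda>t. m * G t) \<longlonglongrightarrow> 0"
    using \<alpha> by simp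
  then show ?thesis
  proof (rule tendsto_zero_if_tradeoff_bound[where B = curv_bound, rotated])
    show "0 \<le> potential s\<^sub>0 - potential (seq t)" for t
      using s\<^sub>0 seq by simp
    show "potential s\<^sub>0 - potential (seq t) \<le> m * G t / \<tau> + \<tau> * curv_bound"
      if "0 < \<tau>" and "\<tau> \<le> 1" for t \<tau>
      using potential_gap_le[OF seq s\<^sub>0(1) eager_rule_gain_bound[OF rule seq] that]
      unfolding G_def by simp
  qed
qed

end

theorem theorem4p1:
  fixes m n :: nat and c d :: "nat \<Rightarrow> real" and rmax rmin \<alpha> :: real
    and sel :: "profile \<Rightarrow> nat \<times> strategy" and seq :: "nat \<Rightarrow> profile"
  assumes "valid_game m n c d rmax rmin"
    and "0 < \<alpha>" and "\<alpha> \<le> 1"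
    and "seq 0 \<in> profiles m n c"
    and "eager_uniform_BR_dynamics m n c d rmax rmin \<alpha> sel seq"
  shows "\<exists>sstar. is_pure_NE m n c d rmax rmin sstar \<and>
           (\<forall>s'. is_pure_NE m n c d rmax rmin s' \<longrightarrow> s' = sstar) \<and>
           (\<forall>i j. (\<lambda>t. seq t i j) \<longlonglongrightarrow> sstar i j)"
proof -
  interpret lending_game m n c d rmax rmin
    by (rule lending_game.intro) (fact assms(1))
  obtain s\<^sub>0 where s\<^sub>0: "s\<^sub>0 \<in> Prof" and s\<^sub>0_max: "\<forall>s\<in>Prof. potential s \<le> potential s\<^sub>0"
    using potential_attains_max by blast
  have s\<^sub>0_bmax: "potential_blockwise_max s\<^sub>0"
    using blockwise_max_if_max[OF s\<^sub>0 s\<^sub>0_max] .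
  have seq: "seq t \<in> Prof" for t
    using eager_dynamics_in_profiles[OF assms(5,4)] assms(2,3) by simp
  have lim: "(\<lambda>t. potential s\<^sub>0 - potential (seq t)) \<longlonglongrightarrow> 0"
    using eager_dynamics_potential_tendsto_max[OF assms(5,4,2,3) s\<^sub>0 s\<^sub>0_max] .
  show ?thesis
  proof (intro exI conjI allI impI)
    show "is_pure_NE m n c d rmax rmin s\<^sub>0"
      using is_pure_NE_iff_blockwise_max[OF s\<^sub>0] s\<^sub>0_bmax by simp
    show "s' = s\<^sub>0" if "is_pure_NE m n c d rmax rmin s'" for s'
      using that blockwise_max_unique[OF _ s\<^sub>0 _ s\<^sub>0_bmax] is_pure_NE_iff_blockwise_max
      by (auto simp: is_pure_NE_def)
    show "(\<lambda>t. seq t i j) \<longlonglongrightarrow> s\<^sub>0 i j" for i j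
      using tendsto_blockwise_max_if_potential_tendsto[OF s\<^sub>0 s\<^sub>0_bmax seq lim] .
  qed
qed

end
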